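(* Let $(q_l)_{l\ge1}$ be positive numbers with $q_1=1$ and $0<R:=\lim_{l\to\infty}q_l/q_{l+1}<\infty$, and assume (EQ): $\tilde f(1)>1$, or $\tilde f(1)=1$ and $\tilde g(1)<\infty$. Let $\rho^*>0$, let $\mu^*\in(0,1]$ be the unique solution of $\tilde f(\mu^* )=1$, and let $z^*_l=N^*\tilde q_l(\mu^* )^l$ with $N^*=\rho^*/\tilde g(\mu^* )$. Then every $z\in X_{0+}$ with $\rho(z)=\rho^*$ satisfies $$\tilde A(z)\ \ge\ \rho^*\ln\mu^*=\tilde A(z^* ).$$
   Context: $X=\{z=(z_l)_{l\ge1}:\sum_l l|z_l|<\infty\}$, $X_{0+}$ its nonnegative elements, $\rho(z)=\sum_l lz_l$, $N(z)=\sum_l z_l$. $\tilde q_l=q_lR^l$, $\tilde f(\mu)=\sum_{l\ge1}\tilde q_l\mu^l$, $\tilde g(\mu)=\sum_{l\ge1}l\tilde q_l\mu^l$, $\tilde f(1)=\sum_l\tilde q_l\in(0,\infty]$, $\tilde g(1)=\sum_l l\tilde q_l\in(0,\infty]$. For $z\in X_{0+}\setminus\{0\}$, $\tilde A(z)=\sum_l z_l\ln\big(z_l/(\tilde q_lN(z))\big)$ with $0\ln0=0$, and $\tilde A(0)=0$. *)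

theory Defs
  imports "HOL-Analysis.Analysis"
begin

text \<open>Sequences z = (z_l)_{l \<ge> 1} are functions nat \<Rightarrow> real; the value at index 0 is ignored.\<close>

definition X0plus :: "(nat \<Rightarrow> real) set" where
  "X0plus = {z. (\<forall>l\<ge>1. z l \<ge> 0) \<and> summable (\<lambda>l. real l * \<bar>z l\<bar>)}"

definition rho :: "(nat \<Rightarrow> real) \<Rightarrow> real" where
  "rho z = (\<Sum>l. real (Suc l) * z (Suc l))"

definition Nz :: "(nat \<Rightarrow> real) \<Rightarrow> real" where
  "Nz z = (\<Sum>l. z (Suc l))"

definition qt :: "(nat \<Rightarrow> real) \<Rightarrow> real \<Rightarrow> nat \<Rightarrow> real" where
  "qt q R l = q l * R ^ l"

definition ftil :: "(nat \<Rightarrow> real) \<Rightarrow> real \<Rightarrow> real \<Rightarrow> ennreal" where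
  "ftil q R \<mu> = (\<Sum>l. ennreal (qt q R (Suc l) * \<mu> ^ Suc l))"

definition gtil :: "(nat \<Rightarrow> real) \<Rightarrow> real \<Rightarrow> real \<Rightarrow> ennreal" where
  "gtil q R \<mu> = (\<Sum>l. ennreal (real (Suc l) * qt q R (Suc l) * \<mu> ^ Suc l))"

text \<open>tilde A(z) = sum_l z_l ln(z_l/(tilde q_l N(z))), with 0 ln 0 = 0 (automatic since ln 0 = 0 in HOL), and tilde A(0) = 0\<close>
definition Atil :: "(nat \<Rightarrow> real) \<Rightarrow> real \<Rightarrow> (nat \<Rightarrow> real) \<Rightarrow> real" where
  "Atil q R z = (if (\<forall>l\<ge>1. z l = 0) then 0
     else (\<Sum>l. z (Suc l) * ln (z (Suc l) / (qt q R (Suc l) * Nz z))))"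

end

theory Submission
  imports Defs
begin

text \<open>
  Since \<open>ftil q R \<mu>s = 1\<close>, the weights \<open>w l = qt q R l * \<mu>s ^ l\<close> form a probability
  distribution, and each term of \<open>Atil q R z\<close> splits as
  \<open>z l * ln (z l / (N * w l)) + l * z l * ln \<mu>s\<close> with \<open>N = Nz z\<close>. The second parts sum to
  \<open>rho z * ln \<mu>s\<close>; the first parts form a relative entropy, which is nonnegative by
  Gibbs' inequality \<open>x * ln (x / y) \<ge> x - y\<close>, and vanish termwise for \<open>z = z*\<close>.
  All series converge: \<open>qt q R (l + 1) / qt q R l \<longrightarrow> 1\<close> makes \<open>ln (qt q R l)\<close> grow at most
  linearly, \<open>z l * ln (z l)\<close> is dominated by \<open>l * z l + 2 exp (- l / 2)\<close> once \<open>z l \<le> 1\<close>,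
  and \<open>gtil q R \<mu>s\<close> is finite by the ratio test if \<open>\<mu>s < 1\<close> and by (EQ) if \<open>\<mu>s = 1\<close>.
\<close>

lemma diff_le_mult_ln_divide:
  fixes x y :: real
  assumes "0 \<le> x" "0 < y"
  shows "x - y \<le> x * ln (x / y)"
proof (cases "x = 0")
  case False
  then have "0 < x" using assms by simp
  have "ln (y / x) \<le> y / x - 1"
    using \<open>0 < x\<close> assms by (intro ln_le_minus_one) simp
  then have "x * ln (y / x) \<le> y - x"
    using \<open>0 < x\<close> by (simp add: field_simps)
  moreover have "ln (x / y) = - ln (y / x)"
    using \<open>0 < x\<close> assms by (simp add: ln_div)
  ultimately show ?thesis by simp
qed (use assms in simp)

lemma abs_mult_ln_le:
  fixes x n :: real
  assumes "0 \<le> x" "x \<le> 1" "0 \<le> n"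
  shows "\<bar>x * ln x\<bar> \<le> n * x + 2 * exp (- n / 2)"
proof (cases "x = 0")
  case False
  then have "0 < x" using assms by simp
  then have "x * ln x \<le> 0"
    using assms by (simp add: mult_nonneg_nonpos)
  then have abs_eq: "\<bar>x * ln x\<bar> = x * - ln x" by simp
  show ?thesis
  proof (cases "exp (- n) \<le> x")
    case True
    then have "- n \<le> ln x"
      using \<open>0 < x\<close> by (metis ln_exp ln_le_cancel_iff exp_gt_zero)
    then have "x * - ln x \<le> x * n"
      using \<open>0 < x\<close> by (intro mult_left_mono) auto
    then show ?thesis using abs_eq by (simp add: mult.commute add_increasing2)
  next
    case False
    \<comment> \<open>\<open>ln t \<le> t - 1\<close> at \<open>t = 1 / sqrt x\<close> gives \<open>-x ln x \<le> 2 sqrt x\<close>\<close>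
    have "ln (1 / sqrt x) \<le> 1 / sqrt x - 1"
      using \<open>0 < x\<close> by (intro ln_le_minus_one) simp
    moreover have "ln (1 / sqrt x) = - ln x / 2"
      using \<open>0 < x\<close> by (simp add: ln_div ln_sqrt)
    ultimately have "- ln x \<le> 2 / sqrt x" by (simp add: field_simps)
    then have "x * - ln x \<le> x * (2 / sqrt x)"
      using \<open>0 < x\<close> by (intro mult_left_mono) auto
    also have "\<dots> = 2 * sqrt x"
      using \<open>0 < x\<close> by (metis real_div_sqrt times_divide_eq_right mult.commute less_imp_le)
    also have "sqrt x \<le> sqrt (exp (- n))" using False by simp
    also have "sqrt (exp (- n)) = exp (- n / 2)"
      by (rule real_sqrt_unique) (simp_all add: power2_eq_square flip: exp_add)
    finally show ?thesis using abs_eq assms by (simp add: add_increasing)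
  qed
qed simp

lemma summable_mult_ln:
  fixes z :: "nat \<Rightarrow> real"
  assumes nonneg: "\<And>l. 0 \<le> z l" and summable: "summable (\<lambda>l. real (Suc l) * z l)"
  shows "summable (\<lambda>l. z l * ln (z l))"
proof -
  have "summable z"
    by (rule summable_comparison_test'[OF summable, of 0]) (simp add: nonneg algebra_simps)
  then have "eventually (\<lambda>l. z l < 1) sequentially"
    by (rule order_tendstoD(2)[OF summable_LIMSEQ_zero]) simp
  then obtain L where small: "\<And>l. L \<le> l \<Longrightarrow> z l \<le> 1"
    unfolding eventually_sequentially by (meson less_imp_le)
  have exp_eq: "exp (- real (Suc l) / 2) = exp (- 1 / 2) * exp (- 1 / 2) ^ l" for l
  proof -
    have "exp (- real (Suc l) / 2) = exp (real (Suc l) * (- 1 / 2))" by (simp add: field_simps)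
    also have "\<dots> = exp (- 1 / 2) ^ Suc l" by (rule exp_of_nat_mult)
    finally show ?thesis by simp
  qed
  have "summable (\<lambda>l. 2 * exp (- real (Suc l) / 2))"
    unfolding exp_eq by (intro summable_mult summable_geometric) simp
  then show ?thesis
  proof (rule summable_comparison_test'[OF summable_add[OF summable], where N = L])
    fix l assume "L \<le> l"
    then show "norm (z l * ln (z l)) \<le> real (Suc l) * z l + 2 * exp (- real (Suc l) / 2)"
      using abs_mult_ln_le[OF nonneg small, of l "real (Suc l)"] by simp
  qed
qed

lemma summable_mult_ln_divide:
  fixes z c :: "nat \<Rightarrow> real"
  assumes nonneg: "\<And>l. 0 \<le> z l" and pos: "\<And>l. 0 < c l"
    and summable: "summable (\<lambda>l. real (Suc l) * z l)"
    and ln_bound: "\<And>l. \<bar>ln (c l)\<bar> \<le> K * real (Suc l)"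
  shows "summable (\<lambda>l. z l * ln (z l / c l))"
proof -
  have split: "z l * ln (z l / c l) = z l * ln (z l) - z l * ln (c l)" for l
    using nonneg[of l] pos[of l] by (cases "z l = 0") (auto simp: ln_div algebra_simps)
  have "norm (z l * ln (c l)) \<le> K * (real (Suc l) * z l)" for l
    using mult_left_mono[OF ln_bound nonneg, of l] by (simp add: abs_mult nonneg algebra_simps)
  then have "summable (\<lambda>l. z l * ln (c l))"
    by (intro summable_comparison_test'[OF summable_mult[OF summable]])
  then show ?thesis
    unfolding split by (intro summable_diff summable_mult_ln nonneg summable)
qed

lemma gibbs_inequality_sums:
  fixes z w :: "nat \<Rightarrow> real"
  assumes "\<And>l. 0 \<le> z l" "\<And>l. 0 < w l" "z sums Z" "w sums W"
    and "summable (\<lambda>l. z l * ln (z l / w l))"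
  shows "Z - W \<le> (\<Sum>l. z l * ln (z l / w l))"
proof (rule sums_le[OF _ sums_diff summable_sums])
  show "z l - w l \<le> z l * ln (z l / w l)" for l
    using assms(1,2) by (rule diff_le_mult_ln_divide)
qed (use assms in auto)

lemma summable_if_ratio_tendsto_less_1:
  fixes f :: "nat \<Rightarrow> real"
  assumes pos: "\<And>l. 0 < f l" and ratio: "(\<lambda>l. f (Suc l) / f l) \<longlonglongrightarrow> r" and "r < 1"
  shows "summable f"
proof -
  have "eventually (\<lambda>l. f (Suc l) / f l < (1 + r) / 2) sequentially"
    using \<open>r < 1\<close> by (intro order_tendstoD(2)[OF ratio]) simp
  then obtain L where "\<And>l. L \<le> l \<Longrightarrow> f (Suc l) / f l < (1 + r) / 2"
    unfolding eventually_sequentially by blast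
  then have "\<And>l. L \<le> l \<Longrightarrow> norm (f (Suc l)) \<le> (1 + r) / 2 * norm (f l)"
    using pos by (simp add: divide_less_eq less_imp_le)
  then show ?thesis
    using \<open>r < 1\<close> by (intro summable_ratio_test[where N = L and c = "(1 + r) / 2"]) auto
qed

lemma abs_ln_le_linear_if_ratio_convergent:
  fixes c :: "nat \<Rightarrow> real"
  assumes pos: "\<And>l. 0 < c l" and ratio: "(\<lambda>l. c (Suc l) / c l) \<longlonglongrightarrow> r" and "0 < r"
  obtains K where "\<And>l. \<bar>ln (c l)\<bar> \<le> K * real (Suc l)"
proof -
  have "(\<lambda>l. ln (c (Suc l) / c l)) \<longlonglongrightarrow> ln r"
    using ratio \<open>0 < r\<close> by (intro tendsto_ln) auto
  then have "Bseq (\<lambda>l. ln (c (Suc l) / c l))"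
    by (rule convergent_imp_Bseq[OF convergentI])
  then obtain M where "0 < M" and M: "\<And>l. \<bar>ln (c (Suc l) / c l)\<bar> \<le> M"
    unfolding Bseq_def real_norm_def by blast
  have "\<bar>ln (c l)\<bar> \<le> \<bar>ln (c 0)\<bar> + real l * M" for l
  proof (induction l)
    case (Suc l)
    have "ln (c (Suc l)) = ln (c l) + ln (c (Suc l) / c l)"
      using pos[of l] pos[of "Suc l"] by (simp add: ln_div)
    then show ?case using Suc M[of l] by (simp add: algebra_simps)
  qed simp
  also have "\<bar>ln (c 0)\<bar> + real l * M \<le> (\<bar>ln (c 0)\<bar> + M) * real (Suc l)" for l
    using \<open>0 < M\<close> by (simp add: algebra_simps)
  finally show ?thesis using that by blast
qed

lemma summable_of_nat_mult_power_if_ratio_tendsto_1: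
  fixes c :: "nat \<Rightarrow> real"
  assumes pos: "\<And>l. 0 < c l" and ratio: "(\<lambda>l. c (Suc l) / c l) \<longlonglongrightarrow> 1"
    and "0 < \<mu>" "\<mu> < 1"
  shows "summable (\<lambda>l. real (Suc l) * c l * \<mu> ^ Suc l)"
proof (rule summable_if_ratio_tendsto_less_1)
  show "0 < real (Suc l) * c l * \<mu> ^ Suc l" for l
    using pos \<open>0 < \<mu>\<close> by simp
  have "(\<lambda>l. real (Suc (Suc l)) / real (Suc l)) \<longlonglongrightarrow> 1"
    using LIMSEQ_Suc[OF LIMSEQ_Suc_n_over_n] by simp
  then have "(\<lambda>l. real (Suc (Suc l)) / real (Suc l) * (c (Suc l) / c l) * \<mu>) \<longlonglongrightarrow> 1 * 1 * \<mu>"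
    by (intro tendsto_intros ratio)
  moreover have "real (Suc (Suc l)) * c (Suc l) * \<mu> ^ Suc (Suc l) / (real (Suc l) * c l * \<mu> ^ Suc l)
      = real (Suc (Suc l)) / real (Suc l) * (c (Suc l) / c l) * \<mu>" for l
    using pos[of l] \<open>0 < \<mu>\<close> by (simp del: of_nat_Suc)
  ultimately show "(\<lambda>l. real (Suc (Suc l)) * c (Suc l) * \<mu> ^ Suc (Suc l) / (real (Suc l) * c l * \<mu> ^ Suc l))
      \<longlonglongrightarrow> \<mu>"
    by simp
qed (use \<open>\<mu> < 1\<close> in simp)

lemma sums_if_suminf_ennreal_eq:
  fixes f :: "nat \<Rightarrow> real"
  assumes "\<And>l. 0 \<le> f l" "0 \<le> s" "(\<Sum>l. ennreal (f l)) = ennreal s"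
  shows "f sums s"
proof -
  have "summable f" using assms by (intro summable_suminf_not_top) auto
  then have "ennreal (suminf f) = ennreal s"
    using assms by (simp flip: suminf_ennreal2)
  then show ?thesis
    using \<open>summable f\<close> assms by (simp add: suminf_nonneg summable_sums_iff)
qed

lemma qt_ratio_tendsto_1:
  assumes qpos: "\<forall>l\<ge>1. q l > 0" and Rlim: "(\<lambda>l. q l / q (Suc l)) \<longlonglongrightarrow> R" and "R > 0"
  shows "(\<lambda>l. qt q R (Suc (Suc l)) / qt q R (Suc l)) \<longlonglongrightarrow> 1"
proof -
  have "qt q R (Suc (Suc l)) / qt q R (Suc l) = R / (q (Suc l) / q (Suc (Suc l)))" for l
    using qpos \<open>R > 0\<close> by (simp add: qt_def field_simps)
  moreover have "(\<lambda>l. R / (q (Suc l) / q (Suc (Suc l)))) \<longlonglongrightarrow> R / R"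
    using \<open>R > 0\<close> by (intro tendsto_intros LIMSEQ_Suc[OF Rlim]) simp
  ultimately show ?thesis using \<open>R > 0\<close> by simp
qed

lemma X0plusD:
  assumes "z \<in> X0plus"
  shows "0 \<le> z (Suc l)"
    and "(\<lambda>l. real (Suc l) * z (Suc l)) sums rho z"
    and "(\<lambda>l. z (Suc l)) sums Nz z"
proof -
  have nonneg: "0 \<le> z (Suc l)" for l using assms by (simp add: X0plus_def)
  then show "0 \<le> z (Suc l)" .
  have "summable (\<lambda>l. real l * \<bar>z l\<bar>)" using assms by (simp add: X0plus_def)
  then have "summable (\<lambda>l. real (Suc l) * \<bar>z (Suc l)\<bar>)"
    by (subst summable_Suc_iff[of "\<lambda>l. real l * \<bar>z l\<bar>"])
  then have summable: "summable (\<lambda>l. real (Suc l) * z (Suc l))"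
    using nonneg by (simp del: of_nat_Suc)
  then show "(\<lambda>l. real (Suc l) * z (Suc l)) sums rho z"
    by (simp add: rho_def summable_sums)
  have "summable (\<lambda>l. z (Suc l))"
    by (rule summable_comparison_test'[OF summable, of 0]) (simp add: nonneg algebra_simps)
  then show "(\<lambda>l. z (Suc l)) sums Nz z"
    by (simp add: Nz_def summable_sums)
qed

lemma Atil_ge_rho_mult_ln:
  assumes qt_pos: "\<And>l. 0 < qt q R (Suc l)"
    and qt_ratio: "(\<lambda>l. qt q R (Suc (Suc l)) / qt q R (Suc l)) \<longlonglongrightarrow> 1"
    and "0 < \<mu>" and weights: "(\<lambda>l. qt q R (Suc l) * \<mu> ^ Suc l) sums 1"
    and z: "z \<in> X0plus" "0 < rho z"
  shows "rho z * ln \<mu> \<le> Atil q R z"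
proof -
  define N where "N = Nz z"
  define w where "w l = N * (qt q R (Suc l) * \<mu> ^ Suc l)" for l
  note nonneg = X0plusD(1)[OF z(1)]
  obtain l0 where "z (Suc l0) \<noteq> 0"
    using \<open>0 < rho z\<close> by (force simp: rho_def)
  then have z_nonzero: "\<not> (\<forall>l\<ge>1. z l = 0)" and "0 < z (Suc l0)"
    using nonneg[of l0] by auto
  have "0 < (\<Sum>l. z (Suc l))"
    using nonneg \<open>0 < z (Suc l0)\<close> by (intro suminf_pos2 sums_summable[OF X0plusD(3)[OF z(1)]])
  then have "0 < N" by (simp add: N_def Nz_def)
  then have w_pos: "0 < w l" for l
    using qt_pos \<open>0 < \<mu>\<close> by (simp add: w_def)
  have "w (Suc l) / w l = qt q R (Suc (Suc l)) / qt q R (Suc l) * \<mu>" for l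
    using \<open>0 < N\<close> qt_pos[of l] \<open>0 < \<mu>\<close> by (simp add: w_def)
  then have "(\<lambda>l. w (Suc l) / w l) \<longlonglongrightarrow> \<mu>"
    using tendsto_mult_right[OF qt_ratio, of \<mu>] by simp
  then obtain K where "\<And>l. \<bar>ln (w l)\<bar> \<le> K * real (Suc l)"
    using abs_ln_le_linear_if_ratio_convergent w_pos \<open>0 < \<mu>\<close> by metis
  with nonneg w_pos sums_summable[OF X0plusD(2)[OF z(1)]]
  have summable: "summable (\<lambda>l. z (Suc l) * ln (z (Suc l) / w l))"
    by (rule summable_mult_ln_divide)
  \<comment> \<open>Dividing by the probability weights \<open>w l / N\<close> instead of \<open>qt q R (Suc l)\<close> costs \<open>(l + 1) ln \<mu>\<close> per unit mass.\<close>
  have term_eq: "z (Suc l) * ln (z (Suc l) / (qt q R (Suc l) * N))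
      = z (Suc l) * ln (z (Suc l) / w l) + real (Suc l) * z (Suc l) * ln \<mu>" for l
  proof (cases "z (Suc l) = 0")
    case False
    then have "0 < z (Suc l)" using nonneg[of l] by simp
    have "z (Suc l) / (qt q R (Suc l) * N) = z (Suc l) / w l * \<mu> ^ Suc l"
      using qt_pos[of l] \<open>0 < N\<close> \<open>0 < \<mu>\<close> by (simp add: w_def field_simps)
    then have "ln (z (Suc l) / (qt q R (Suc l) * N)) = ln (z (Suc l) / w l) + ln (\<mu> ^ Suc l)"
      using \<open>0 < z (Suc l)\<close> w_pos[of l] \<open>0 < \<mu>\<close> by (simp only:) (intro ln_mult_pos; simp)
    then show ?thesis by (simp only: ln_realpow) (simp add: algebra_simps)
  qed simp
  have "(\<lambda>l. z (Suc l) * ln (z (Suc l) / (qt q R (Suc l) * N)))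
      sums ((\<Sum>l. z (Suc l) * ln (z (Suc l) / w l)) + rho z * ln \<mu>)"
    unfolding term_eq using summable X0plusD(2)[OF z(1)]
    by (intro sums_add sums_mult2) (auto simp: summable_sums)
  then have "Atil q R z = (\<Sum>l. z (Suc l) * ln (z (Suc l) / w l)) + rho z * ln \<mu>"
    using z_nonzero by (simp only: Atil_def N_def if_False sums_iff)
  moreover have "N - N * 1 \<le> (\<Sum>l. z (Suc l) * ln (z (Suc l) / w l))"
    using X0plusD(3)[OF z(1)] sums_mult[OF weights, of N] nonneg w_pos summable
    unfolding N_def w_def by (intro gibbs_inequality_sums) auto
  ultimately show ?thesis by simp
qed

lemma Atil_geometric:
  assumes qt_pos: "\<And>l. 0 < qt q R (Suc l)" and "0 < \<mu>" "0 < c"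
    and weights: "(\<lambda>l. qt q R (Suc l) * \<mu> ^ Suc l) sums 1"
    and mean: "(\<lambda>l. real (Suc l) * qt q R (Suc l) * \<mu> ^ Suc l) sums G"
  shows "Atil q R (\<lambda>l. c * qt q R l * \<mu> ^ l) = c * G * ln \<mu>"
proof -
  define z where "z l = c * qt q R l * \<mu> ^ l" for l
  have "Nz z = c"
    using sums_mult[OF weights, of c] by (simp add: Nz_def z_def sums_iff mult.assoc)
  then have "z (Suc l) / (qt q R (Suc l) * Nz z) = \<mu> ^ Suc l" for l
    using qt_pos[of l] \<open>0 < c\<close> by (simp add: z_def)
  then have term_eq: "z (Suc l) * ln (z (Suc l) / (qt q R (Suc l) * Nz z))
      = c * ln \<mu> * (real (Suc l) * qt q R (Suc l) * \<mu> ^ Suc l)" for l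
    by (simp only: ln_realpow) (simp add: z_def mult_ac)
  have "\<not> (\<forall>l\<ge>1. z l = 0)"
    using qt_pos[of 0] \<open>0 < c\<close> \<open>0 < \<mu>\<close> by (auto simp: z_def intro!: exI[of _ 1])
  then have "Atil q R z = (\<Sum>l. c * ln \<mu> * (real (Suc l) * qt q R (Suc l) * \<mu> ^ Suc l))"
    by (simp only: Atil_def term_eq if_False)
  also have "\<dots> = c * ln \<mu> * G"
    using sums_mult[OF mean, of "c * ln \<mu>"] by (simp add: sums_iff)
  finally show ?thesis by (simp add: z_def[abs_def] mult_ac)
qed

lemma summable_gtil_terms:
  assumes qt_pos: "\<And>l. 0 < qt q R (Suc l)"
    and qt_ratio: "(\<lambda>l. qt q R (Suc (Suc l)) / qt q R (Suc l)) \<longlonglongrightarrow> 1"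
    and EQ: "ftil q R 1 > 1 \<or> (ftil q R 1 = 1 \<and> gtil q R 1 < \<infinity>)"
    and "0 < \<mu>" "\<mu> \<le> 1" "ftil q R \<mu> = 1"
  shows "summable (\<lambda>l. real (Suc l) * qt q R (Suc l) * \<mu> ^ Suc l)"
proof (cases "\<mu> = 1")
  case True
  with EQ \<open>ftil q R \<mu> = 1\<close> have "gtil q R \<mu> \<noteq> \<infinity>" by auto
  then show ?thesis
    using qt_pos \<open>0 < \<mu>\<close> by (intro summable_suminf_not_top) (simp_all add: gtil_def less_imp_le)
next
  case False
  with \<open>\<mu> \<le> 1\<close> show ?thesis
    by (intro summable_of_nat_mult_power_if_ratio_tendsto_1 qt_pos qt_ratio \<open>0 < \<mu>\<close>) simp
qed

theorem corollary11:
  fixes q :: "nat \<Rightarrow> real" and R \<rho>s \<mu>s :: real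
  assumes qpos: "\<forall>l\<ge>1. q l > 0"
    and q1: "q 1 = 1"
    and Rlim: "(\<lambda>l. q l / q (Suc l)) \<longlonglongrightarrow> R"
    and Rpos: "R > 0"
    and EQ: "ftil q R 1 > 1 \<or> (ftil q R 1 = 1 \<and> gtil q R 1 < \<infinity>)"
    and rhos: "\<rho>s > 0"
    and mus: "\<mu>s \<in> {0<..1}" "ftil q R \<mu>s = 1"
  shows "\<forall>z\<in>X0plus. rho z = \<rho>s \<longrightarrow>
           Atil q R z \<ge> \<rho>s * ln \<mu>s \<and>
           \<rho>s * ln \<mu>s = Atil q R (\<lambda>l. (\<rho>s / enn2real (gtil q R \<mu>s)) * qt q R l * \<mu>s ^ l)"
proof -
  have "0 < \<mu>s" "\<mu>s \<le> 1" using mus(1) by auto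
  have qt_pos: "0 < qt q R (Suc l)" for l using qpos Rpos by (simp add: qt_def)
  note qt_ratio = qt_ratio_tendsto_1[OF qpos Rlim Rpos]
  have weights: "(\<lambda>l. qt q R (Suc l) * \<mu>s ^ Suc l) sums 1"
    using mus(2) qt_pos \<open>0 < \<mu>s\<close>
    by (intro sums_if_suminf_ennreal_eq) (auto simp: ftil_def less_imp_le)
  define g where "g = (\<lambda>l. real (Suc l) * qt q R (Suc l) * \<mu>s ^ Suc l)"
  have "summable g" unfolding g_def
    using summable_gtil_terms[OF qt_pos qt_ratio EQ \<open>0 < \<mu>s\<close> \<open>\<mu>s \<le> 1\<close> mus(2)] .
  have g_pos: "0 < g l" for l using qt_pos \<open>0 < \<mu>s\<close> by (simp add: g_def)
  then have "gtil q R \<mu>s = ennreal (suminf g)" and "0 < suminf g"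
    using suminf_ennreal2[OF less_imp_le \<open>summable g\<close>] suminf_pos[OF \<open>summable g\<close>]
    by (simp_all add: gtil_def g_def)
  with \<open>summable g\<close> have "Atil q R (\<lambda>l. (\<rho>s / enn2real (gtil q R \<mu>s)) * qt q R l * \<mu>s ^ l) = \<rho>s * ln \<mu>s"
    using Atil_geometric[OF qt_pos \<open>0 < \<mu>s\<close> _ weights, of "\<rho>s / suminf g" "suminf g"] rhos
    unfolding g_def by (simp add: summable_sums)
  then show ?thesis
    using Atil_ge_rho_mult_ln[OF qt_pos qt_ratio \<open>0 < \<mu>s\<close> weights] rhos by auto
qed

end
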